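(* Let $d\in\mathbb N$, $\mathcal D=\{1,\dots,d\}$, $f\in \mathrm L_2(\mathbb T^d)$ and let $U\subseteq\mathcal P(\mathcal D)$ be a subset of ANOVA terms. Then $$\mathrm T_Uf=\sum_{\mathbf u\in U}\ \sum_{\substack{\mathbf v\in U\\ \mathbf u\subseteq\mathbf v}}(-1)^{|\mathbf v|-|\mathbf u|}\,\mathrm P_{\mathbf u}f.$$
   Context: $\mathbb T=[0,1)$ with periodic identification. For $\mathbf u\subseteq\mathcal D$, $\mathbf u^c=\mathcal D\setminus\mathbf u$, $\mathbf x_{\mathbf u}=(x_i)_{i\in\mathbf u}$. Projection: $\mathrm P_{\mathbf u}f(\mathbf x_{\mathbf u})=\int_{\mathbb T^{|\mathbf u^c|}}f(\mathbf x)\,d\mathbf x_{\mathbf u^c}$, viewed as a function on $\mathbb T^d$. ANOVA terms: $f_{\mathbf u}=\mathrm P_{\mathbf u}f-\sum_{\mathbf v\subsetneq\mathbf u}f_{\mathbf v}$ (recursively). A subset of ANOVA terms is a set $U\subseteq\mathcal P(\mathcal D)$ such that $\mathbf u\in U$, $\mathbf v\subseteq\mathbf u$ imply $\mathbf v\in U$; $\mathrm T_Uf=\sum_{\mathbf u\in U}f_{\mathbf u}$. *)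

theory Defs
  imports "HOL-Probability.Probability"
begin

definition Dset :: "nat \<Rightarrow> nat set" where
  "Dset d = {1..d}"

definition torus1 :: "real measure" where
  "torus1 = restrict_space lborel {0..<1}"

definition torus :: "nat set \<Rightarrow> (nat \<Rightarrow> real) measure" where
  "torus I = PiM I (\<lambda>_. torus1)"

definition L2_torus :: "nat \<Rightarrow> ((nat \<Rightarrow> real) \<Rightarrow> complex) set" where
  "L2_torus d = {f. f \<in> borel_measurable (torus (Dset d))
                   \<and> integrable (torus (Dset d)) (\<lambda>x. (norm (f x))\<^sup>2)}"

text \<open>Projection P_u f: integrate out the variables in u^c = D - u; the result is
  viewed as a function on T^d (depending only on x_u).\<close>
definition proj :: "nat \<Rightarrow> nat set \<Rightarrow> ((nat \<Rightarrow> real) \<Rightarrow> complex) \<Rightarrow> (nat \<Rightarrow> real) \<Rightarrow> complex" where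
  "proj d u f x = (\<integral>y. f (merge u (Dset d - u) (x, y)) \<partial>torus (Dset d - u))"

function anova :: "nat \<Rightarrow> ((nat \<Rightarrow> real) \<Rightarrow> complex) \<Rightarrow> nat set \<Rightarrow> (nat \<Rightarrow> real) \<Rightarrow> complex" where
  "anova d f u = (if finite u
      then (\<lambda>x. proj d u f x - (\<Sum>v\<in>{v. v \<subset> u}. anova d f v x))
      else (\<lambda>x. 0))"
  by auto
termination
  by (relation "inv_image finite_psubset (\<lambda>(d, f, u). u)") auto

definition anova_subset :: "nat \<Rightarrow> nat set set \<Rightarrow> bool" where
  "anova_subset d U \<longleftrightarrow> U \<subseteq> Pow (Dset d) \<and> (\<forall>u\<in>U. \<forall>v. v \<subseteq> u \<longrightarrow> v \<in> U)"

definition trunc :: "nat \<Rightarrow> nat set set \<Rightarrow> ((nat \<Rightarrow> real) \<Rightarrow> complex) \<Rightarrow> (nat \<Rightarrow> real) \<Rightarrow> complex" where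
  "trunc d U f x = (\<Sum>u\<in>U. anova d f u x)"

end

theory Submission
  imports Defs
begin

text \<open>Pointwise in x, the recursion defining the ANOVA terms says that P_u f is the sum of
  the f_v over v \<subseteq> u. Moebius inversion on the subset lattice gives
  f_u = \<Sum>w\<subseteq>u. (-1)^(|u|-|w|) P_w f, and summing over a downward closed U and swapping the
  two sums yields the claim. No integrability of f is needed.\<close>

lemma proj_eq_sum_anova:
  assumes "finite u"
  shows "proj d u f x = (\<Sum>v\<in>Pow u. anova d f v x)"
proof -
  have "Pow u = insert u {v. v \<subset> u}" by auto
  moreover have "finite {v. v \<subset> u}"
    using assms by (auto intro: finite_subset[of _ "Pow u"])
  ultimately show ?thesis using assms by simp
qed

lemma anova_eq_moebius_proj:
  assumes "finite u"
  shows "anova d f u x = (\<Sum>w\<in>Pow u. (-1) ^ (card u - card w) * proj d w f x)"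
  by (rule inclusion_exclusion_mobius[where g = "\<lambda>w. proj d w f x"])
     (use assms proj_eq_sum_anova in auto)

lemma trunc_eq_sum_proj:
  assumes "finite U" and down_closed: "\<And>u v. u \<in> U \<Longrightarrow> v \<subseteq> u \<Longrightarrow> v \<in> U"
  shows "trunc d U f x =
         (\<Sum>u\<in>U. \<Sum>v\<in>{v\<in>U. u \<subseteq> v}. (-1) ^ (card v - card u) * proj d u f x)"
proof -
  have "anova d f v x = (\<Sum>w\<in>{w\<in>U. w \<subseteq> v}. (-1) ^ (card v - card w) * proj d w f x)"
    if "v \<in> U" for v
  proof -
    have "Pow v \<subseteq> U" using that down_closed by auto
    then have "finite (Pow v)" using \<open>finite U\<close> by (rule finite_subset)
    then have "finite v" by simp
    moreover have "Pow v = {w\<in>U. w \<subseteq> v}" using \<open>Pow v \<subseteq> U\<close> by auto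
    ultimately show ?thesis by (simp add: anova_eq_moebius_proj del: anova.simps)
  qed
  then have "trunc d U f x =
      (\<Sum>v\<in>U. \<Sum>w\<in>{w\<in>U. w \<subseteq> v}. (-1) ^ (card v - card w) * proj d w f x)"
    unfolding trunc_def by (simp del: anova.simps)
  also have "\<dots> = (\<Sum>u\<in>U. \<Sum>v\<in>{v\<in>U. u \<subseteq> v}. (-1) ^ (card v - card u) * proj d u f x)"
    by (rule sum.swap_restrict[OF \<open>finite U\<close> \<open>finite U\<close>])
  finally show ?thesis .
qed

theorem lemma4p4:
  fixes d :: nat and f :: "(nat \<Rightarrow> real) \<Rightarrow> complex" and U :: "nat set set"
  assumes "f \<in> L2_torus d"
    and "anova_subset d U"
  shows "\<forall>x \<in> space (torus (Dset d)).
           trunc d U f x =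
           (\<Sum>u\<in>U. \<Sum>v\<in>{v\<in>U. u \<subseteq> v}. (-1) ^ (card v - card u) * proj d u f x)"
proof -
  have "U \<subseteq> Pow (Dset d)" and down_closed: "\<And>u v. u \<in> U \<Longrightarrow> v \<subseteq> u \<Longrightarrow> v \<in> U"
    using assms(2) unfolding anova_subset_def by auto
  moreover have "finite (Pow (Dset d))" by (simp add: Dset_def)
  ultimately have "finite U" by (blast intro: finite_subset)
  with down_closed show ?thesis
    by (simp add: trunc_eq_sum_proj)
qed

end
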